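(* Let $M\in\mathrm{M}_n(\mathbb{K})$ be a cyclic matrix with minimal polynomial $f=f_1^{m_1}\cdots f_s^{m_s}$, where $f_1,\dots,f_s\in\mathbb{K}[x]$ are pairwise distinct monic irreducible polynomials and $m_i\ge1$. Then every nonzero $M$-cyclic code $\mathcal{C}\subseteq\mathbb{L}^n$ satisfies $M_1(\mathcal{C})=1$ if and only if $f_1,\dots,f_s$ are all irreducible in $\mathbb{L}[x]$.
   Context: Let $\mathbb{L}/\mathbb{K}$ be a field extension of finite degree $m\ge n$. Vectors are row vectors. For $c=(c_1,\dots,c_n)\in\mathbb{L}^n$, $\mathrm{wt}_R(c)=\dim_{\mathbb{K}}\mathrm{Span}_{\mathbb{K}}(c_1,\dots,c_n)$, and for a nonzero linear code $\mathcal{C}\subseteq\mathbb{L}^n$ (an $\mathbb{L}$-subspace), $M_1(\mathcal{C})=\min\{\mathrm{wt}_R(c):0\neq c\in\mathcal{C}\}$. A matrix $M\in\mathrm{M}_n(\mathbb{K})$ is cyclic if there is $v\in\mathbb{K}^n$ with $(v,vM^t,\dots,v(M^t)^{n-1})$ a basis of $\mathbb{K}^n$. An $M$-cyclic code is an $\mathbb{L}$-subspace $\mathcal{C}\subseteq\mathbb{L}^n$ with $cM^t\in\mathcal{C}$ for all $c\in\mathcal{C}$, where $M$ is cyclic. *)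

theory Defs
  imports "HOL-Analysis.Analysis" "HOL-Computational_Algebra.Polynomial"
begin

text \<open>Field extension L/K given by a ring embedding e : K -> L; L is a K-vector space
  via the scalar multiplication a . x = e a * x.\<close>

definition scaleK :: "('k::field \<Rightarrow> 'l::field) \<Rightarrow> 'k \<Rightarrow> 'l \<Rightarrow> 'l" where
  "scaleK e a x = e a * x"

definition field_ext :: "('k::field \<Rightarrow> 'l::field) \<Rightarrow> bool" where
  "field_ext e \<longleftrightarrow> (\<forall>a b. e (a + b) = e a + e b) \<and> (\<forall>a b. e (a * b) = e a * e b) \<and> e 1 = 1"

definition finite_degree :: "('k::field \<Rightarrow> 'l::field) \<Rightarrow> bool" where
  "finite_degree e \<longleftrightarrow> (\<exists>B. finite B \<and> module.span (scaleK e) B = UNIV)"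

definition degree_ext :: "('k::field \<Rightarrow> 'l::field) \<Rightarrow> nat" where
  "degree_ext e = vector_space.dim (scaleK e) (UNIV :: 'l set)"

definition wt_R :: "('k::field \<Rightarrow> 'l::field) \<Rightarrow> 'l ^ 'n \<Rightarrow> nat" where
  "wt_R e c = vector_space.dim (scaleK e) (module.span (scaleK e) (range (\<lambda>i. c $ i)))"

definition M1 :: "('k::field \<Rightarrow> 'l::field) \<Rightarrow> ('l ^ 'n) set \<Rightarrow> nat" where
  "M1 e C = Min {wt_R e c | c. c \<in> C \<and> c \<noteq> 0}"

definition linear_code :: "('l::field ^ 'n) set \<Rightarrow> bool" where
  "linear_code C \<longleftrightarrow> 0 \<in> C \<and> (\<forall>x\<in>C. \<forall>y\<in>C. x + y \<in> C) \<and> (\<forall>a. \<forall>x\<in>C. a *s x \<in> C)"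

definition matpow :: "'a::semiring_1 ^ 'n ^ 'n \<Rightarrow> nat \<Rightarrow> 'a ^ 'n ^ 'n" where
  "matpow M k = ((\<lambda>A. M ** A) ^^ k) (mat 1)"

text \<open>Cyclic matrix: some v such that (v, v M^t, ..., v (M^t)^(n-1)) is a basis of K^n.
  For a row vector v, v (M^t)^k is the (column) vector M^k v.\<close>
definition cyclic_matrix :: "'k::field ^ 'n ^ 'n \<Rightarrow> bool" where
  "cyclic_matrix M \<longleftrightarrow> (\<exists>v :: 'k ^ 'n.
     inj_on (\<lambda>k. matpow M k *v v) {..<CARD('n)} \<and>
     vec.independent ((\<lambda>k. matpow M k *v v) ` {..<CARD('n)}) \<and>
     vec.span ((\<lambda>k. matpow M k *v v) ` {..<CARD('n)}) = UNIV)"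

definition poly_mat :: "'a::comm_ring_1 poly \<Rightarrow> 'a ^ 'n ^ 'n \<Rightarrow> 'a ^ 'n ^ 'n" where
  "poly_mat p M = (\<chi> i j. \<Sum>k\<le>degree p. coeff p k * (matpow M k $ i $ j))"

definition is_min_poly :: "'k::field ^ 'n ^ 'n \<Rightarrow> 'k poly \<Rightarrow> bool" where
  "is_min_poly M f \<longleftrightarrow> lead_coeff f = 1 \<and> poly_mat f M = 0 \<and>
     (\<forall>g. poly_mat g M = 0 \<longrightarrow> f dvd g)"

text \<open>c M^t for a row vector c in L^n and M with entries in K (embedded via e).\<close>
definition apply_Mt :: "('k::field \<Rightarrow> 'l::field) \<Rightarrow> 'k ^ 'n ^ 'n \<Rightarrow> 'l ^ 'n \<Rightarrow> 'l ^ 'n" where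
  "apply_Mt e M c = (\<chi> i. \<Sum>j\<in>UNIV. e (M $ i $ j) * c $ j)"

text \<open>M-cyclic code (M is assumed cyclic separately).\<close>
definition M_cyclic_code :: "('k::field \<Rightarrow> 'l::field) \<Rightarrow> 'k ^ 'n ^ 'n \<Rightarrow> ('l ^ 'n) set \<Rightarrow> bool" where
  "M_cyclic_code e M C \<longleftrightarrow> linear_code C \<and> (\<forall>c\<in>C. apply_Mt e M c \<in> C)"

end

(*
  Fix a cyclic vector v of M.  Then q \<mapsto> q(M) v identifies K^n with K[x]/(f) and L^n with
  L[x]/(f), so M-cyclic codes are the ideals of L[x]/(f), and a codeword has rank weight 1 iff
  it is a nonzero multiple of a vector with entries in K, i.e. of some u(M) v with u in K[x].

  If all f_i stay irreducible over L, a nonzero code contains d(M) v for a proper divisor d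
  of f in L[x] (Bezout); then d divides f/f_j for some j, and (f/f_j)(M) v is a nonzero vector
  with entries in K.  Conversely, if f_i = a b properly over L, the code ker a(M) is nonzero,
  but a K-rational vector u(M) v in it forces f | a u over L, so the image of a non-unit factor
  f/gcd(f,u) of f in K[x] divides a.  Some f_j divides that factor, hence f_j and then f_i
  divide a, and b would be a unit.
*)
theory Submission
  imports Defs "HOL-Computational_Algebra.Polynomial_Factorial"
begin

section \<open>Bezout identities and irreducible factors\<close>

(* For an arbitrary field 'a, the type 'a poly is a Euclidean ring but has no gcd or
   factorial-semiring instance, so Bezout and irreducible factors are obtained from the
   Euclidean size directly. *)
lemma euclidean_ring_bezout:
  fixes a b :: "'a::euclidean_ring"
  obtains d x y where "x * a + y * b = d" "d dvd a" "d dvd b"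
proof (cases "a = 0 \<and> b = 0")
  case True
  then show ?thesis using that[of 0 0 0] by simp
next
  case False
  define I where "I = {z. z \<noteq> 0 \<and> (\<exists>x y. x * a + y * b = z)}"
  have "1 * a + 0 * b = a" "0 * a + 1 * b = b" by simp_all
  then have "a \<in> I \<or> b \<in> I"
    using False unfolding I_def by blast
  then obtain d where d: "d \<in> I" and d_min: "\<And>z. z \<in> I \<Longrightarrow> euclidean_size d \<le> euclidean_size z"
    using ex_has_least_nat[of "\<lambda>z. z \<in> I" _ euclidean_size] by blast
  then obtain x y where xy: "x * a + y * b = d" and "d \<noteq> 0"
    unfolding I_def by blast
  have "d dvd z" if "x' * a + y' * b = z" for x' y' z
  proof (rule ccontr)
    assume "\<not> d dvd z"
    then have "z mod d \<noteq> 0" by (simp add: mod_eq_0_iff_dvd)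
    moreover have "(x' - z div d * x) * a + (y' - z div d * y) * b = z - z div d * (x * a + y * b)"
      using that by (simp add: algebra_simps)
    then have "(x' - z div d * x) * a + (y' - z div d * y) * b = z mod d"
      by (simp add: xy minus_div_mult_eq_mod)
    ultimately have "z mod d \<in> I" unfolding I_def by blast
    then have "euclidean_size d \<le> euclidean_size (z mod d)" by (rule d_min)
    with mod_size_less[OF \<open>d \<noteq> 0\<close>, of z] show False by simp
  qed
  from this[of 1 0 a] this[of 0 1 b] show ?thesis using that[OF xy] by simp
qed

lemma irreducible_divisor_exists:
  fixes a :: "'a::euclidean_semiring"
  assumes "a \<noteq> 0" "\<not> is_unit a"
  shows "\<exists>p. irreducible p \<and> p dvd a"
  using assms
proof (induction "euclidean_size a" arbitrary: a rule: less_induct)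
  case less
  show ?case
  proof (cases "irreducible a")
    case False
    then obtain b c where a: "a = b * c" "\<not> is_unit b" "\<not> is_unit c"
      using less.prems by (auto simp: irreducible_def)
    then have "b \<noteq> 0" using less.prems by auto
    have "\<not> a dvd b"
    proof
      assume "a dvd b"
      then have "b * c dvd b * 1" using a(1) by simp
      with \<open>b \<noteq> 0\<close> a(3) show False using dvd_times_left_cancel_iff[of b c 1] by simp
    qed
    then have "euclidean_size b < euclidean_size a"
      using a less.prems by (intro dvd_proper_imp_size_less) simp_all
    with less.hyps \<open>b \<noteq> 0\<close> a(2) obtain p where "irreducible p" "p dvd b" by blast
    with a(1) show ?thesis by auto
  qed auto
qed

lemma prime_elem_dvd_prod_power:
  fixes g :: "'b \<Rightarrow> 'a::comm_semiring_1"
  assumes "prime_elem p" "finite A" "p dvd (\<Prod>i\<in>A. g i ^ m i)"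
  shows "\<exists>i\<in>A. p dvd g i"
  using assms(2,3)
proof (induction A rule: finite_induct)
  case empty
  then show ?case using assms(1) by (simp add: prime_elem_not_unit)
next
  case (insert j A)
  then have "p dvd g j ^ m j \<or> p dvd (\<Prod>i\<in>A. g i ^ m i)"
    using prime_elem_dvd_mult_iff[OF assms(1)] by simp
  then show ?case
    using insert.IH prime_elem_dvd_power[OF assms(1)] by blast
qed

lemma ex_irreducible_factor_dvd:
  fixes g :: "'b \<Rightarrow> 'a::field poly"
  assumes "\<forall>i\<in>A. irreducible (g i)" "finite A" "t dvd (\<Prod>i\<in>A. g i ^ m i)"
    and "t \<noteq> 0" "\<not> is_unit t"
  shows "\<exists>i\<in>A. g i dvd t"
proof -
  obtain p where p: "irreducible p" "p dvd t"
    using irreducible_divisor_exists assms(4,5) by blast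
  then obtain i where i: "i \<in> A" "p dvd g i"
    using prime_elem_dvd_prod_power[OF field_poly_irreducible_imp_prime assms(2)]
      dvd_trans[OF p(2) assms(3)] by blast
  moreover have "\<not> is_unit p" using p(1) by (rule irreducible_not_unit)
  ultimately have "g i dvd p"
    using assms(1) irreducibleD' by blast
  with i(1) p(2) show ?thesis by (blast intro: dvd_trans)
qed

section \<open>Polynomials in a linear endomorphism\<close>

definition poly_op :: "('a::field ^ 'n \<Rightarrow> 'a ^ 'n) \<Rightarrow> 'a poly \<Rightarrow> 'a ^ 'n \<Rightarrow> 'a ^ 'n" where
  "poly_op T p x = (\<Sum>k\<le>degree p. coeff p k *s (T ^^ k) x)"

lemma poly_op_eq_sum:
  assumes "degree p \<le> N"
  shows "poly_op T p x = (\<Sum>k\<le>N. coeff p k *s (T ^^ k) x)"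
  unfolding poly_op_def using assms
  by (intro sum.mono_neutral_left) (auto simp: coeff_eq_0)

lemma poly_op_eq_sum_lessThan:
  assumes "degree p < N"
  shows "poly_op T p x = (\<Sum>k<N. coeff p k *s (T ^^ k) x)"
  unfolding poly_op_def using assms
  by (intro sum.mono_neutral_left) (auto simp: coeff_eq_0)

lemma poly_op_0 [simp]: "poly_op T 0 x = 0"
  by (simp add: poly_op_def)

definition krylov :: "('a ^ 'n \<Rightarrow> 'a ^ 'n) \<Rightarrow> 'a ^ 'n \<Rightarrow> nat \<Rightarrow> ('a ^ 'n) set" where
  "krylov T v m = (\<lambda>k. (T ^^ k) v) ` {..<m}"

locale linear_endo =
  fixes T :: "'a::field ^ 'n \<Rightarrow> 'a ^ 'n"
  assumes linear: "Vector_Spaces.linear (*s) (*s) T"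
begin

lemma linear_funpow: "Vector_Spaces.linear (*s) (*s) (T ^^ k)"
proof (induction k)
  case (Suc k)
  then show ?case using Vector_Spaces.linear_compose[OF Suc.IH linear] by (simp add: comp_def)
qed (simp add: vec.linear_ident)

lemma linear_poly_op: "Vector_Spaces.linear (*s) (*s) (poly_op T p)"
  unfolding poly_op_def
  by (intro vec.linear_compose_sum ballI vec.linear_compose_scale_right linear_funpow)

lemma poly_op_0_right [simp]: "poly_op T p 0 = 0"
  by (rule vec.linear_0[OF linear_poly_op])

lemma poly_op_add: "poly_op T (p + q) x = poly_op T p x + poly_op T q x"
  using degree_add_le_max[of p q]
  by (simp add: poly_op_eq_sum[of _ "max (degree p) (degree q)"] vector_sadd_rdistrib sum.distrib)

lemma poly_op_diff: "poly_op T (p - q) x = poly_op T p x - poly_op T q x"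
  using poly_op_add[of "p - q" q x] by (simp add: algebra_simps)

lemma poly_op_smult: "poly_op T (smult a p) x = a *s poly_op T p x"
  using degree_smult_le[of a p]
  by (simp add: poly_op_eq_sum[of _ "degree p"] vec.scale_sum_right)

lemma poly_op_pCons: "poly_op T (pCons a p) x = a *s x + T (poly_op T p x)"
proof -
  have "poly_op T (pCons a p) x = (\<Sum>k\<le>Suc (degree p). coeff (pCons a p) k *s (T ^^ k) x)"
    using degree_pCons_le by (rule poly_op_eq_sum)
  also have "\<dots> = a *s x + (\<Sum>k\<le>degree p. coeff p k *s (T ^^ Suc k) x)"
    by (subst sum.atMost_Suc_shift) simp
  finally show ?thesis
    by (simp add: poly_op_def vec.linear_sum[OF linear] vec.linear_scale[OF linear])
qed

lemma poly_op_mult: "poly_op T (p * q) x = poly_op T p (poly_op T q x)"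
  by (induction p) (simp_all add: poly_op_add poly_op_smult poly_op_pCons)

lemma poly_op_commute: "poly_op T p (poly_op T q x) = poly_op T q (poly_op T p x)"
  by (metis poly_op_mult mult.commute)

lemma poly_op_monom: "poly_op T (monom a k) x = a *s (T ^^ k) x"
proof -
  have "poly_op T (monom a k) x = (\<Sum>j\<le>k. if j = k then a *s (T ^^ j) x else 0)"
    unfolding poly_op_eq_sum[OF degree_monom_le] by (intro sum.cong) (auto simp: coeff_monom)
  then show ?thesis by simp
qed

lemma poly_op_sum: "poly_op T (sum p A) x = (\<Sum>i\<in>A. poly_op T (p i) x)"
  by (induction A rule: infinite_finite_induct) (simp_all add: poly_op_add)

lemma poly_op_commute_endo: "poly_op T p (T x) = T (poly_op T p x)"
  using poly_op_commute[of p "[:0, 1:]" x] by (simp add: poly_op_pCons vec.linear_0[OF linear])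

lemma poly_op_in_invariant_subspace:
  assumes "vec.subspace C" "\<And>x. x \<in> C \<Longrightarrow> T x \<in> C" "x \<in> C"
  shows "poly_op T p x \<in> C"
  by (induction p) (simp_all add: poly_op_pCons assms vec.subspace_0 vec.subspace_add vec.subspace_scale)

lemma kernel_poly_op_invariant_subspace:
  "vec.subspace {x. poly_op T p x = 0}" "x \<in> {x. poly_op T p x = 0} \<Longrightarrow> T x \<in> {x. poly_op T p x = 0}"
  by (simp_all add: vec.subspace_def vec.linear_add[OF linear_poly_op] vec.linear_scale[OF linear_poly_op]
      poly_op_commute_endo vec.linear_0[OF linear])

lemma poly_op_in_span_krylov:
  assumes "degree q < m"
  shows "poly_op T q v \<in> vec.span (krylov T v m)"
proof -
  have "poly_op T q v = (\<Sum>k<m. coeff q k *s (T ^^ k) v)"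
    using assms by (rule poly_op_eq_sum_lessThan)
  also have "\<dots> \<in> vec.span (krylov T v m)"
    using assms by (intro vec.span_sum vec.span_scale vec.span_base) (auto simp: krylov_def)
  finally show ?thesis .
qed

lemma span_krylov_imp_poly_op:
  assumes "0 < m" "inj_on (\<lambda>k. (T ^^ k) v) {..<m}" "x \<in> vec.span (krylov T v m)"
  shows "\<exists>q. degree q < m \<and> x = poly_op T q v"
proof -
  obtain u where "x = (\<Sum>w\<in>krylov T v m. u w *s w)"
    using assms(3) vec.span_finite[of "krylov T v m"] by (auto simp: krylov_def)
  also have "\<dots> = (\<Sum>k<m. u ((T ^^ k) v) *s (T ^^ k) v)"
    unfolding krylov_def by (subst sum.reindex[OF assms(2)]) simp
  also have "\<dots> = poly_op T (\<Sum>k<m. monom (u ((T ^^ k) v)) k) v"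
    by (simp add: poly_op_sum poly_op_monom)
  moreover have "degree (\<Sum>k<m. monom (u ((T ^^ k) v)) k) < m"
    using assms(1) by (auto intro!: degree_sum_less le_less_trans[OF degree_monom_le])
  ultimately show ?thesis by blast
qed

end

section \<open>Cyclic vectors\<close>

locale cyclic_endo = linear_endo T for T :: "'a::field ^ 'n \<Rightarrow> 'a ^ 'n" +
  fixes v :: "'a ^ 'n"
  assumes krylov_inj: "inj_on (\<lambda>k. (T ^^ k) v) {..<CARD('n)}"
    and krylov_spans: "vec.span (krylov T v CARD('n)) = UNIV"
begin

lemma cyclic_vector_generates: "\<exists>q. degree q < CARD('n) \<and> x = poly_op T q v"
  using span_krylov_imp_poly_op[OF _ krylov_inj] krylov_spans by simp

lemma krylov_independent: "vec.independent (krylov T v CARD('n))"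
proof (rule vec.card_le_dim_spanning[of _ UNIV])
  show "card (krylov T v CARD('n)) \<le> vec.dim (UNIV :: ('a ^ 'n) set)"
    using krylov_inj by (simp add: krylov_def card_image vec.dim_UNIV card_cart_basis)
qed (simp_all add: krylov_spans[unfolded krylov_def] krylov_def)

lemma small_degree_annihilator_eq_0:
  assumes "degree q < CARD('n)" "poly_op T q v = 0"
  shows "q = 0"
proof (rule poly_eqI)
  fix k
  show "coeff q k = coeff 0 k"
  proof (cases "k < CARD('n)")
    case True
    let ?index = "the_inv_into {..<CARD('n)} (\<lambda>k. (T ^^ k) v)"
    have "(\<Sum>w\<in>krylov T v CARD('n). coeff q (?index w) *s w)
        = (\<Sum>j<CARD('n). coeff q j *s (T ^^ j) v)"
      unfolding krylov_def sum.reindex[OF krylov_inj]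
      by (intro sum.cong refl) (simp add: the_inv_into_f_f[OF krylov_inj])
    also have "\<dots> = 0"
      using assms by (simp add: poly_op_eq_sum_lessThan)
    finally have "(\<Sum>w\<in>krylov T v CARD('n). coeff q (?index w) *s w) = 0" .
    then have "coeff q (?index ((T ^^ k) v)) = 0"
      by (intro vec.independentD[OF krylov_independent _ subset_refl]) (auto simp: krylov_def True)
    with True the_inv_into_f_f[OF krylov_inj, of k] show ?thesis by simp
  qed (use assms(1) in \<open>simp add: coeff_eq_0\<close>)
qed

lemma annihilator_of_cyclic_vector_annihilates:
  assumes "poly_op T p v = 0"
  shows "poly_op T p x = 0"
proof -
  obtain q where "x = poly_op T q v"
    using cyclic_vector_generates by blast
  then show ?thesis
    using assms poly_op_commute[of p q v] by simp
qed

lemma ex_annihilator_degree_le_card: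
  "\<exists>h. h \<noteq> 0 \<and> degree h \<le> CARD('n) \<and> poly_op T h v = 0"
proof -
  obtain q where q: "degree q < CARD('n)" "(T ^^ CARD('n)) v = poly_op T q v"
    using cyclic_vector_generates by blast
  define h where "h = monom 1 CARD('n) - q"
  have "coeff h CARD('n) = 1"
    using q(1) by (simp add: h_def coeff_eq_0)
  moreover have "degree h \<le> CARD('n)"
    using q(1) unfolding h_def by (intro degree_diff_le degree_monom_le) simp
  moreover have "poly_op T h v = 0"
    by (simp add: h_def poly_op_diff poly_op_monom q(2))
  ultimately show ?thesis by (intro exI[of _ h]) auto
qed

lemma annihilator_dvd:
  assumes "p \<noteq> 0" "degree p \<le> CARD('n)" "poly_op T p v = 0" "poly_op T q v = 0"
  shows "p dvd q"
proof (rule ccontr)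
  assume "\<not> p dvd q"
  then have "q mod p \<noteq> 0"
    by (simp add: mod_eq_0_iff_dvd)
  moreover have "degree (q mod p) < CARD('n)"
    using degree_mod_less'[OF assms(1) \<open>q mod p \<noteq> 0\<close>] assms(2) by simp
  moreover have "q mod p = q - q div p * p"
    by (simp add: minus_div_mult_eq_mod)
  then have "poly_op T (q mod p) v = 0"
    using assms(3,4) by (simp add: poly_op_diff poly_op_mult)
  ultimately show False
    using small_degree_annihilator_eq_0 by blast
qed

end

section \<open>Square matrices as endomorphisms\<close>

lemma linear_endo_matrix: "linear_endo ((*v) A)"
  unfolding linear_endo_def by (rule matrix_vector_mul_linear_gen)

lemma matpow_mult_vec: "matpow A k *v x = ((*v) A ^^ k) x"
  by (induction k arbitrary: x) (simp_all add: matpow_def flip: matrix_vector_mul_assoc)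

lemma poly_mat_mult_vec: "poly_mat p A *v x = poly_op ((*v) A) p x"
proof -
  have "(poly_mat p A *v x) $ i = poly_op ((*v) A) p x $ i" for i
  proof -
    have "(poly_mat p A *v x) $ i = (\<Sum>j\<in>UNIV. \<Sum>k\<le>degree p. coeff p k * (matpow A k $ i $ j * x $ j))"
      by (simp add: poly_mat_def matrix_vector_mult_def sum_distrib_right mult.assoc)
    also have "\<dots> = (\<Sum>k\<le>degree p. coeff p k * (matpow A k *v x) $ i)"
      by (subst sum.swap) (simp add: matrix_vector_mult_def sum_distrib_left)
    finally show ?thesis
      by (simp add: poly_op_def matpow_mult_vec)
  qed
  then show ?thesis by (simp add: vec_eq_iff)
qed

lemma poly_mat_eq_0_iff: "poly_mat p A = 0 \<longleftrightarrow> (\<forall>x. poly_op ((*v) A) p x = 0)"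
  by (simp add: matrix_eq poly_mat_mult_vec)

lemma cyclic_matrix_imp_cyclic_endo:
  fixes A :: "'a::field ^ 'n ^ 'n"
  assumes "cyclic_matrix A"
  obtains v where "cyclic_endo ((*v) A) v"
proof -
  from assms obtain v where
    "inj_on (\<lambda>k. matpow A k *v v) {..<CARD('n)}"
    "vec.span ((\<lambda>k. matpow A k *v v) ` {..<CARD('n)}) = UNIV"
    unfolding cyclic_matrix_def by blast
  then have "cyclic_endo ((*v) A) v"
    by (intro cyclic_endo.intro linear_endo_matrix cyclic_endo_axioms.intro)
      (simp_all add: matpow_mult_vec krylov_def)
  then show ?thesis by (rule that)
qed

section \<open>Extension of scalars along a field embedding\<close>

definition map_vector :: "('a \<Rightarrow> 'b) \<Rightarrow> 'a ^ 'n \<Rightarrow> 'b ^ 'n" where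
  "map_vector h x = (\<chi> i. h (x $ i))"

lemma apply_Mt_eq_map_matrix: "apply_Mt h A = (*v) (map_matrix h A)"
  by (simp add: fun_eq_iff apply_Mt_def matrix_vector_mult_def map_matrix_def)

locale field_embedding =
  fixes e :: "'k::field \<Rightarrow> 'l::field"
  assumes field_ext: "field_ext e"
begin

lemma hom_add: "e (a + b) = e a + e b"
  and hom_mult: "e (a * b) = e a * e b"
  and hom_1 [simp]: "e 1 = 1"
  using field_ext by (simp_all add: field_ext_def)

lemma hom_0 [simp]: "e 0 = 0"
  using hom_add[of 0 0] by (metis add.right_neutral add_left_cancel)

lemma hom_eq_0_iff [simp]: "e a = 0 \<longleftrightarrow> a = 0"
proof
  assume "e a = 0"
  show "a = 0"
  proof (rule ccontr)
    assume "a \<noteq> 0"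
    then have "e a * e (inverse a) = 1"
      by (simp flip: hom_mult)
    with \<open>e a = 0\<close> show False by simp
  qed
qed simp

lemma hom_sum: "e (sum f A) = (\<Sum>i\<in>A. e (f i))"
  by (induction A rule: infinite_finite_induct) (simp_all add: hom_add)

lemma hom_inj: "e a = e b \<longleftrightarrow> a = b"
proof -
  have "e a = e (a - b) + e b"
    by (simp flip: hom_add)
  then show ?thesis by simp
qed

lemma degree_map_poly_hom [simp]: "degree (map_poly e p) = degree p"
  by (rule degree_map_poly) simp

lemma map_poly_hom_eq_0_iff [simp]: "map_poly e p = 0 \<longleftrightarrow> p = 0"
  by (simp add: map_poly_eq_0_iff)

lemma map_poly_hom_add: "map_poly e (p + q) = map_poly e p + map_poly e q"
  by (rule poly_eqI) (simp add: coeff_map_poly hom_add)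

lemma map_poly_hom_mult: "map_poly e (p * q) = map_poly e p * map_poly e q"
proof (induction p)
  case (pCons a p)
  have "pCons a p * q = smult a q + pCons 0 (p * q)" by simp
  then show ?case
    by (simp add: map_poly_hom_add map_poly_smult hom_mult map_poly_pCons pCons.IH)
qed simp

lemma map_poly_hom_prod_power: "map_poly e (\<Prod>i\<in>A. p i ^ m i) = (\<Prod>i\<in>A. map_poly e (p i) ^ m i)"
proof -
  have "map_poly e (p ^ k) = map_poly e p ^ k" for p k
    by (induction k) (simp_all add: map_poly_hom_mult)
  then show ?thesis
    by (induction A rule: infinite_finite_induct) (simp_all add: map_poly_hom_mult)
qed

lemma map_poly_hom_dvd: "p dvd q \<Longrightarrow> map_poly e p dvd map_poly e q"
  by (auto simp: map_poly_hom_mult elim!: dvdE)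

lemma map_poly_hom_is_unit_iff: "is_unit (map_poly e p) \<longleftrightarrow> is_unit p"
  by (cases "p = 0") (simp_all add: is_unit_iff_degree)

lemma map_poly_hom_dvd_iff: "map_poly e p dvd map_poly e q \<longleftrightarrow> p dvd q"
proof
  assume dvd: "map_poly e p dvd map_poly e q"
  show "p dvd q"
  proof (rule ccontr)
    assume "\<not> p dvd q"
    with dvd have "p \<noteq> 0" "q mod p \<noteq> 0"
      by (auto simp: mod_eq_0_iff_dvd)
    have "map_poly e (q div p) * map_poly e p + map_poly e (q mod p) = map_poly e q"
      by (simp only: div_mult_mod_eq flip: map_poly_hom_mult map_poly_hom_add)
    with dvd have "map_poly e p dvd map_poly e (q mod p)"
      by (metis dvd_add_right_iff dvd_triv_right)
    then have "degree p \<le> degree (q mod p)"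
      using dvd_imp_degree_le[of "map_poly e p" "map_poly e (q mod p)"] \<open>q mod p \<noteq> 0\<close> by simp
    with degree_mod_less'[OF \<open>p \<noteq> 0\<close> \<open>q mod p \<noteq> 0\<close>] show False
      by simp
  qed
qed (rule map_poly_hom_dvd)

lemma map_poly_hom_dvd_mult_imp_factor:
  assumes dvd: "map_poly e f dvd A * map_poly e q" and "f \<noteq> 0" "\<not> f dvd q"
  obtains g where "g dvd f" "\<not> is_unit g" "map_poly e g dvd A"
proof -
  obtain d x y where bezout: "x * f + y * q = d" "d dvd f" "d dvd q"
    by (rule euclidean_ring_bezout)
  then obtain g where g: "f = d * g"
    by (elim dvdE)
  have "A * map_poly e d = (A * map_poly e x) * map_poly e f + map_poly e y * (A * map_poly e q)"
    by (simp flip: bezout(1) add: map_poly_hom_add map_poly_hom_mult algebra_simps)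
  also have "map_poly e f dvd \<dots>"
    using dvd by simp
  finally have "map_poly e g * map_poly e d dvd A * map_poly e d"
    by (simp add: g map_poly_hom_mult mult.commute)
  moreover have "d \<noteq> 0"
    using g \<open>f \<noteq> 0\<close> by auto
  ultimately have "map_poly e g dvd A"
    by simp
  moreover have "\<not> is_unit g"
  proof
    assume "is_unit g"
    then have "f dvd d"
      by (simp add: g)
    with bezout(3) \<open>\<not> f dvd q\<close> show False
      by (blast intro: dvd_trans)
  qed
  ultimately show ?thesis
    using g by (intro that) simp_all
qed

lemma proper_divisor_dvd_map_poly_cofactor:
  assumes dt: "map_poly e f = d * t" "\<not> is_unit t" and "f \<noteq> 0"
    and factorization: "f = (\<Prod>i\<in>A. g i ^ m i)" "finite A"
    and irr: "\<forall>i\<in>A. irreducible (map_poly e (g i))"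
  obtains j h where "j \<in> A" "f = g j * h" "d dvd map_poly e h"
proof -
  have "t \<noteq> 0"
    using dt(1) \<open>f \<noteq> 0\<close> by auto
  moreover have "t dvd (\<Prod>i\<in>A. map_poly e (g i) ^ m i)"
    using dt(1) by (simp add: factorization(1) map_poly_hom_prod_power)
  ultimately obtain j where j: "j \<in> A" "map_poly e (g j) dvd t"
    using ex_irreducible_factor_dvd[OF irr factorization(2)] dt(2) by blast
  then obtain t' where t': "t = map_poly e (g j) * t'"
    by (elim dvdE)
  have "map_poly e (g j) dvd map_poly e f"
    using dt(1) t' by simp
  then obtain h where h: "f = g j * h"
    by (auto simp: map_poly_hom_dvd_iff elim: dvdE)
  have "map_poly e (g j) * map_poly e h = map_poly e (g j) * (d * t')"
    using dt(1) t' by (simp add: h map_poly_hom_mult mult_ac)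
  moreover have "map_poly e (g j) \<noteq> 0"
    using irr j(1) by auto
  ultimately have "map_poly e h = d * t'"
    by simp
  then have "d dvd map_poly e h"
    by simp
  with j(1) h show ?thesis
    by (rule that)
qed

lemma map_vector_add: "map_vector e (x + y) = map_vector e x + map_vector e y"
  by (simp add: map_vector_def vec_eq_iff hom_add)

lemma map_vector_scale: "map_vector e (a *s x) = e a *s map_vector e x"
  by (simp add: map_vector_def vec_eq_iff hom_mult)

lemma map_vector_inj: "map_vector e x = map_vector e y \<longleftrightarrow> x = y"
  by (simp add: map_vector_def vec_eq_iff hom_inj)

lemma map_vector_eq_0_iff [simp]: "map_vector e x = 0 \<longleftrightarrow> x = 0"
  by (simp add: map_vector_def vec_eq_iff)

lemma map_matrix_mult_map_vector: "map_matrix e A *v map_vector e x = map_vector e (A *v x)"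
  by (simp add: map_vector_def map_matrix_def matrix_vector_mult_def vec_eq_iff hom_sum hom_mult)

lemma funpow_map_matrix_map_vector:
  fixes A :: "'k ^ 'n ^ 'n"
  shows "((*v) (map_matrix e A) ^^ k) (map_vector e x) = map_vector e (((*v) A ^^ k) x)"
  by (induction k) (simp_all add: map_matrix_mult_map_vector)

lemma poly_op_map_poly:
  fixes A :: "'k ^ 'n ^ 'n"
  shows "poly_op ((*v) (map_matrix e A)) (map_poly e p) (map_vector e x) = map_vector e (poly_op ((*v) A) p x)"
proof (induction p)
  case (pCons a p)
  interpret TK: linear_endo "(*v) A" by (rule linear_endo_matrix)
  interpret TL: linear_endo "(*v) (map_matrix e A)" by (rule linear_endo_matrix)
  show ?case
    by (simp add: map_poly_pCons TK.poly_op_pCons TL.poly_op_pCons pCons.IH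
        map_matrix_mult_map_vector map_vector_add map_vector_scale)
qed simp

lemma cyclic_endo_map_matrix:
  fixes A :: "'k ^ 'n ^ 'n"
  assumes "cyclic_endo ((*v) A) v"
  shows "cyclic_endo ((*v) (map_matrix e A)) (map_vector e v)"
proof -
  interpret TK: cyclic_endo "(*v) A" v by (rule assms)
  interpret TL: linear_endo "(*v) (map_matrix e A)" by (rule linear_endo_matrix)
  have "axis i 1 \<in> vec.span (krylov ((*v) (map_matrix e A)) (map_vector e v) CARD('n))" for i
  proof -
    obtain q where q: "degree q < CARD('n)" "axis i 1 = poly_op ((*v) A) q v"
      using TK.cyclic_vector_generates by blast
    have "axis i (1 :: 'l) = map_vector e (axis i 1)"
      by (simp add: map_vector_def axis_def vec_eq_iff)
    also have "\<dots> = poly_op ((*v) (map_matrix e A)) (map_poly e q) (map_vector e v)"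
      by (simp add: q(2) poly_op_map_poly)
    finally show ?thesis
      using q(1) by (simp add: TL.poly_op_in_span_krylov)
  qed
  then have "cart_basis \<subseteq> vec.span (krylov ((*v) (map_matrix e A)) (map_vector e v) CARD('n))"
    by (auto simp: cart_basis_def)
  then have "vec.span (krylov ((*v) (map_matrix e A)) (map_vector e v) CARD('n)) = UNIV"
    using vec.span_mono[of cart_basis] span_cart_basis by (metis top_le vec.span_span)
  moreover have "inj_on (\<lambda>k. ((*v) (map_matrix e A) ^^ k) (map_vector e v)) {..<CARD('n)}"
    using TK.krylov_inj by (simp add: inj_on_def funpow_map_matrix_map_vector map_vector_inj)
  ultimately show ?thesis
    by unfold_locales
qed

subsection \<open>Rank weight\<close>

sublocale over_K: vector_space "scaleK e"
  by unfold_locales (simp_all add: scaleK_def hom_add hom_mult algebra_simps)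

lemma wt_R_le_card: "wt_R e (c :: 'l ^ 'n) \<le> CARD('n)"
proof -
  have "wt_R e c \<le> card (range (\<lambda>i. c $ i))"
    unfolding wt_R_def over_K.dim_span by (rule over_K.dim_le_card') simp
  also have "\<dots> \<le> CARD('n)"
    by (rule card_image_le) simp
  finally show ?thesis .
qed

lemma wt_R_basis:
  obtains B where "finite B" "over_K.independent B" "range (\<lambda>i. c $ i) \<subseteq> over_K.span B"
    "card B = wt_R e c"
proof -
  obtain B where B: "B \<subseteq> over_K.span (range (\<lambda>i. c $ i))" "over_K.independent B"
      "over_K.span (range (\<lambda>i. c $ i)) \<subseteq> over_K.span B" "card B = wt_R e c"
    unfolding wt_R_def by (rule over_K.basis_exists)
  have "finite B"
    using over_K.independent_span_bound[of "range (\<lambda>i. c $ i)" B] B by auto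
  moreover have "range (\<lambda>i. c $ i) \<subseteq> over_K.span B"
    using over_K.span_superset B(3) by (rule order_trans)
  ultimately show ?thesis
    using that B(2,4) by simp
qed

lemma wt_R_eq_0_iff: "wt_R e c = 0 \<longleftrightarrow> c = 0"
proof
  assume "wt_R e c = 0"
  obtain B where "finite B" "range (\<lambda>i. c $ i) \<subseteq> over_K.span B" "card B = wt_R e c"
    by (rule wt_R_basis)
  with \<open>wt_R e c = 0\<close> have "range (\<lambda>i. c $ i) \<subseteq> over_K.span {}"
    by simp
  then show "c = 0"
    by (auto simp: vec_eq_iff)
next
  assume "c = 0"
  then have "range (\<lambda>i. c $ i) \<subseteq> over_K.span {}"
    by auto
  then show "wt_R e c = 0"
    unfolding wt_R_def over_K.dim_span using over_K.dim_le_card[of _ "{}"] by simp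
qed

lemma wt_R_eq_1_iff:
  "wt_R e c = 1 \<longleftrightarrow> (\<exists>l u. l \<noteq> 0 \<and> u \<noteq> 0 \<and> c = l *s map_vector e u)"
proof
  assume wt: "wt_R e c = 1"
  obtain B where B: "finite B" "over_K.independent B" "range (\<lambda>i. c $ i) \<subseteq> over_K.span B"
    "card B = wt_R e c"
    by (rule wt_R_basis)
  with wt obtain l where "B = {l}"
    by (auto simp: card_1_singleton_iff)
  with B(2) have "l \<noteq> 0"
    by simp
  have "\<exists>a. c $ i = e a * l" for i
    using B(3) unfolding \<open>B = {l}\<close> over_K.span_singleton scaleK_def by blast
  then obtain a where "\<And>i. c $ i = e (a i) * l"
    by metis
  then have "c = l *s map_vector e (\<chi> i. a i)"
    by (simp add: vec_eq_iff map_vector_def mult.commute)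
  moreover have "c \<noteq> 0"
    using wt by (metis wt_R_eq_0_iff zero_neq_one)
  ultimately show "\<exists>l u. l \<noteq> 0 \<and> u \<noteq> 0 \<and> c = l *s map_vector e u"
    using \<open>l \<noteq> 0\<close> by auto
next
  assume "\<exists>l u. l \<noteq> 0 \<and> u \<noteq> 0 \<and> c = l *s map_vector e u"
  then obtain l u where lu: "l \<noteq> 0" "u \<noteq> 0" "c = l *s map_vector e u"
    by blast
  have "range (\<lambda>i. c $ i) \<subseteq> over_K.span {l}"
    using lu(3) by (auto simp: over_K.span_singleton scaleK_def map_vector_def mult.commute)
  then have "wt_R e c \<le> 1"
    unfolding wt_R_def over_K.dim_span using over_K.dim_le_card[of _ "{l}"] by simp
  moreover have "c \<noteq> 0"
    using lu by (auto simp: vec_eq_iff map_vector_def)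
  ultimately show "wt_R e c = 1"
    using wt_R_eq_0_iff[of c] by linarith
qed

lemma M1_eq_1_iff:
  fixes C :: "('l ^ 'n) set"
  assumes "\<exists>c\<in>C. c \<noteq> 0"
  shows "M1 e C = 1 \<longleftrightarrow> (\<exists>c\<in>C. c \<noteq> 0 \<and> wt_R e c = 1)"
proof -
  let ?W = "{wt_R e c | c. c \<in> C \<and> c \<noteq> 0}"
  have "finite ?W"
    by (rule finite_subset[of _ "{..CARD('n)}"]) (auto simp: wt_R_le_card)
  moreover have "?W \<noteq> {}"
    using assms by blast
  moreover have "\<forall>w\<in>?W. 1 \<le> w"
    using wt_R_eq_0_iff by (auto simp: Suc_le_eq)
  ultimately have "M1 e C = 1 \<longleftrightarrow> 1 \<in> ?W"
    unfolding M1_def by (metis (no_types, lifting) Min_in Min_le antisym)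
  then show ?thesis
    by auto
qed

lemma ex_weight_1_iff_map_vector_mem:
  assumes "vec.subspace C"
  shows "(\<exists>c\<in>C. c \<noteq> 0 \<and> wt_R e c = 1) \<longleftrightarrow> (\<exists>u. u \<noteq> 0 \<and> map_vector e u \<in> C)"
proof
  assume "\<exists>c\<in>C. c \<noteq> 0 \<and> wt_R e c = 1"
  then obtain c where "c \<in> C" "wt_R e c = 1"
    by auto
  then obtain l u where "l \<noteq> 0" "u \<noteq> 0" "c = l *s map_vector e u"
    using wt_R_eq_1_iff by blast
  with \<open>c \<in> C\<close> have "l *s map_vector e u \<in> C"
    by simp
  then have "inverse l *s (l *s map_vector e u) \<in> C"
    by (rule vec.subspace_scale[OF assms])
  with \<open>l \<noteq> 0\<close> \<open>u \<noteq> 0\<close> show "\<exists>u. u \<noteq> 0 \<and> map_vector e u \<in> C"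
    by auto
next
  assume "\<exists>u. u \<noteq> 0 \<and> map_vector e u \<in> C"
  then obtain u where "u \<noteq> 0" "map_vector e u \<in> C"
    by blast
  moreover have "wt_R e (map_vector e u) = 1"
    unfolding wt_R_eq_1_iff using \<open>u \<noteq> 0\<close> by (intro exI[of _ 1] exI[of _ u]) simp
  ultimately show "\<exists>c\<in>C. c \<noteq> 0 \<and> wt_R e c = 1"
    by force
qed

lemma M1_eq_1_iff_map_vector_mem:
  fixes C :: "('l ^ 'n) set"
  assumes "vec.subspace C" "C \<noteq> {0}"
  shows "M1 e C = 1 \<longleftrightarrow> (\<exists>u. u \<noteq> 0 \<and> map_vector e u \<in> C)"
proof -
  have "\<exists>c\<in>C. c \<noteq> 0"
    using assms vec.subspace_0 by blast
  then show ?thesis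
    by (rule trans[OF M1_eq_1_iff ex_weight_1_iff_map_vector_mem[OF assms(1)]])
qed

end

section \<open>M-cyclic codes\<close>

lemma M_cyclic_code_iff:
  "M_cyclic_code e M C \<longleftrightarrow> vec.subspace C \<and> (\<forall>c\<in>C. map_matrix e M *v c \<in> C)"
  by (simp add: M_cyclic_code_def linear_code_def vec.subspace_def apply_Mt_eq_map_matrix)

locale cyclic_code_setting = field_embedding e for e :: "'k::field \<Rightarrow> 'l::field" +
  fixes M :: "'k ^ 'n ^ 'n" and v :: "'k ^ 'n" and f :: "'k poly"
  assumes cyclic: "cyclic_endo ((*v) M) v"
    and min_poly: "is_min_poly M f"
begin

sublocale TK: cyclic_endo "(*v) M" v
  by (rule cyclic)

sublocale TL: cyclic_endo "(*v) (map_matrix e M)" "map_vector e v"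
  by (rule cyclic_endo_map_matrix[OF cyclic])

lemma min_poly_nonzero: "f \<noteq> 0"
  using min_poly by (auto simp: is_min_poly_def)

lemma poly_op_cyclic_vector_eq_0_iff: "poly_op ((*v) M) p v = 0 \<longleftrightarrow> f dvd p"
proof
  assume "poly_op ((*v) M) p v = 0"
  then have "poly_mat p M = 0"
    by (simp add: poly_mat_eq_0_iff TK.annihilator_of_cyclic_vector_annihilates)
  with min_poly show "f dvd p"
    by (simp add: is_min_poly_def)
next
  assume "f dvd p"
  moreover have "poly_op ((*v) M) f x = 0" for x
    using min_poly by (simp add: is_min_poly_def poly_mat_eq_0_iff)
  ultimately show "poly_op ((*v) M) p v = 0"
    by (auto simp: TK.poly_op_mult mult.commute elim!: dvdE)
qed

lemma degree_min_poly_le: "degree f \<le> CARD('n)"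
proof -
  obtain h where "h \<noteq> 0" "degree h \<le> CARD('n)" "poly_op ((*v) M) h v = 0"
    using TK.ex_annihilator_degree_le_card by blast
  then show ?thesis
    using poly_op_cyclic_vector_eq_0_iff dvd_imp_degree_le[of f h] by simp
qed

lemma poly_op_map_cyclic_vector_eq_0_iff:
  "poly_op ((*v) (map_matrix e M)) P (map_vector e v) = 0 \<longleftrightarrow> map_poly e f dvd P"
proof
  have F: "poly_op ((*v) (map_matrix e M)) (map_poly e f) (map_vector e v) = 0"
    by (simp add: poly_op_map_poly poly_op_cyclic_vector_eq_0_iff)
  show "map_poly e f dvd P" if "poly_op ((*v) (map_matrix e M)) P (map_vector e v) = 0"
    using TL.annihilator_dvd[OF _ _ F that] min_poly_nonzero degree_min_poly_le by simp
  show "poly_op ((*v) (map_matrix e M)) P (map_vector e v) = 0" if "map_poly e f dvd P"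
    using that F by (auto simp: TL.poly_op_mult mult.commute elim!: dvdE)
qed

lemma code_contains_proper_divisor:
  assumes "vec.subspace C" "\<And>c. c \<in> C \<Longrightarrow> map_matrix e M *v c \<in> C" "C \<noteq> {0}"
  obtains d t where "map_poly e f = d * t" "\<not> is_unit t"
    "poly_op ((*v) (map_matrix e M)) d (map_vector e v) \<in> C"
proof -
  obtain c where "c \<in> C" "c \<noteq> 0"
    using assms(1,3) vec.subspace_0 by blast
  obtain q where q: "c = poly_op ((*v) (map_matrix e M)) q (map_vector e v)"
    using TL.cyclic_vector_generates by blast
  obtain d x y where bezout: "x * q + y * map_poly e f = d" "d dvd q" "d dvd map_poly e f"
    by (rule euclidean_ring_bezout)
  then obtain t where t: "map_poly e f = d * t"
    by (elim dvdE)
  have "poly_op ((*v) (map_matrix e M)) (map_poly e f) (map_vector e v) = 0"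
    by (simp add: poly_op_map_cyclic_vector_eq_0_iff)
  then have "poly_op ((*v) (map_matrix e M)) d (map_vector e v) = poly_op ((*v) (map_matrix e M)) x c"
    by (simp flip: bezout(1) add: q TL.poly_op_add TL.poly_op_mult)
  also have "\<dots> \<in> C"
    using assms(1,2) \<open>c \<in> C\<close> by (rule TL.poly_op_in_invariant_subspace)
  finally have "poly_op ((*v) (map_matrix e M)) d (map_vector e v) \<in> C" .
  moreover have "\<not> is_unit t"
  proof
    assume "is_unit t"
    then have "map_poly e f dvd q"
      using t bezout(2) by (simp add: mult_unit_dvd_iff)
    with q \<open>c \<noteq> 0\<close> show False
      by (simp add: poly_op_map_cyclic_vector_eq_0_iff)
  qed
  ultimately show ?thesis
    using t that by simp
qed

lemma M1_eq_1_if_factors_irreducible: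
  assumes factorization: "f = (\<Prod>i\<in>A. g i ^ m i)" "finite A"
    and irr: "\<forall>i\<in>A. irreducible (map_poly e (g i))"
    and code: "M_cyclic_code e M C" "C \<noteq> {0}"
  shows "M1 e C = 1"
proof -
  have sub: "vec.subspace C" and inv: "\<And>c. c \<in> C \<Longrightarrow> map_matrix e M *v c \<in> C"
    using code(1) by (simp_all add: M_cyclic_code_iff)
  obtain d t where dt: "map_poly e f = d * t" "\<not> is_unit t"
    and d_in: "poly_op ((*v) (map_matrix e M)) d (map_vector e v) \<in> C"
    by (rule code_contains_proper_divisor[OF sub inv code(2)])
  obtain j h where j: "j \<in> A" and h: "f = g j * h" and "d dvd map_poly e h"
    by (rule proper_divisor_dvd_map_poly_cofactor[OF dt min_poly_nonzero factorization irr])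
  then obtain t' where h_eq: "map_poly e h = d * t'"
    by (elim dvdE)
  have "poly_op ((*v) (map_matrix e M)) (map_poly e h) (map_vector e v) \<in> C"
    unfolding h_eq mult.commute[of d] TL.poly_op_mult
    by (rule TL.poly_op_in_invariant_subspace[OF sub inv d_in])
  moreover have "poly_op ((*v) M) h v \<noteq> 0"
  proof
    assume "poly_op ((*v) M) h v = 0"
    then have "g j * h dvd h"
      by (simp add: poly_op_cyclic_vector_eq_0_iff flip: h)
    moreover have "h \<noteq> 0"
      using h min_poly_nonzero by auto
    ultimately have "is_unit (map_poly e (g j))"
      by (simp add: map_poly_hom_is_unit_iff)
    with irr j show False
      by (auto simp: irreducible_def)
  qed
  ultimately show ?thesis
    using M1_eq_1_iff_map_vector_mem[OF sub code(2)] by (auto simp: poly_op_map_poly)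
qed

lemma proper_factor_annihilates_no_map_vector:
  assumes factorization: "f = (\<Prod>i\<in>A. g i ^ m i)" "finite A"
    and irr: "\<forall>i\<in>A. irreducible (g i)" and "i \<in> A"
    and ab: "map_poly e (g i) = a * b" "\<not> is_unit b"
    and u: "poly_op ((*v) (map_matrix e M)) a (map_vector e u) = 0"
  shows "u = 0"
proof (rule ccontr)
  assume "u \<noteq> 0"
  obtain q where q: "u = poly_op ((*v) M) q v"
    using TK.cyclic_vector_generates by blast
  have "poly_op ((*v) (map_matrix e M)) (a * map_poly e q) (map_vector e v) = 0"
    using u by (simp add: q TL.poly_op_mult poly_op_map_poly)
  then have "map_poly e f dvd a * map_poly e q"
    by (simp add: poly_op_map_cyclic_vector_eq_0_iff)
  moreover have "\<not> f dvd q"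
    using \<open>u \<noteq> 0\<close> q by (simp flip: poly_op_cyclic_vector_eq_0_iff)
  ultimately obtain r where r: "r dvd f" "\<not> is_unit r" "map_poly e r dvd a"
    using min_poly_nonzero by (elim map_poly_hom_dvd_mult_imp_factor)
  have "r \<noteq> 0"
    using r(1) min_poly_nonzero by auto
  then obtain j where j: "j \<in> A" "g j dvd r"
    using ex_irreducible_factor_dvd[OF _ factorization(2) r(1)[unfolded factorization(1)]] irr r(2)
    by (auto simp: irreducible_def)
  have "map_poly e (g j) dvd map_poly e (g i)"
    unfolding ab(1) using map_poly_hom_dvd[OF j(2)] r(3) by (auto intro: dvd_trans)
  then have "g j dvd g i"
    by (simp add: map_poly_hom_dvd_iff)
  then have "g i dvd g j"
    using irr \<open>i \<in> A\<close> j(1) irreducibleD' by (metis irreducible_not_unit)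
  then have "map_poly e (g i) dvd map_poly e (g j)"
    by (rule map_poly_hom_dvd)
  also have "\<dots> dvd map_poly e r"
    using j(2) by (rule map_poly_hom_dvd)
  also have "\<dots> dvd a"
    by (rule r(3))
  finally have "a * b dvd a"
    by (simp only: ab(1))
  moreover have "a \<noteq> 0"
    using irr \<open>i \<in> A\<close> ab(1) by (auto simp: irreducible_def)
  ultimately show False
    using ab(2) by simp
qed

lemma M1_ne_1_if_factor_reducible:
  assumes factorization: "f = (\<Prod>i\<in>A. g i ^ m i)" "finite A"
    and irr: "\<forall>i\<in>A. irreducible (g i)"
    and i: "i \<in> A" "1 \<le> m i" and red: "\<not> irreducible (map_poly e (g i))"
  shows "\<exists>C. M_cyclic_code e M C \<and> C \<noteq> {0} \<and> M1 e C \<noteq> 1"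
proof -
  let ?T = "(*v) (map_matrix e M)" and ?v = "map_vector e v" and ?P = "map_poly e (g i)"
  have "?P \<noteq> 0" "\<not> is_unit ?P"
    using irr i(1) by (auto simp: map_poly_hom_is_unit_iff irreducible_def)
  with red obtain a b where ab: "?P = a * b" "\<not> is_unit a" "\<not> is_unit b"
    by (auto simp: irreducible_def)
  have "g i dvd g i ^ m i"
    using i(2) by (simp add: dvd_power)
  also have "\<dots> dvd f"
    unfolding factorization(1) using factorization(2) i(1) by (rule dvd_prodI)
  finally obtain h where h: "f = g i * h"
    by (elim dvdE)
  have F: "map_poly e f = a * (b * map_poly e h)"
    by (simp add: h map_poly_hom_mult ab(1) mult.assoc)
  define C where "C = {c. poly_op ?T a c = 0}"
  have sub: "vec.subspace C" and code: "M_cyclic_code e M C"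
    unfolding C_def M_cyclic_code_iff using TL.kernel_poly_op_invariant_subspace by auto
  have "poly_op ?T (b * map_poly e h) ?v \<in> C"
    unfolding C_def by (simp flip: TL.poly_op_mult F add: poly_op_map_cyclic_vector_eq_0_iff)
  moreover have "poly_op ?T (b * map_poly e h) ?v \<noteq> 0"
  proof
    assume "poly_op ?T (b * map_poly e h) ?v = 0"
    then have "a * (b * map_poly e h) dvd 1 * (b * map_poly e h)"
      by (simp flip: F add: poly_op_map_cyclic_vector_eq_0_iff)
    moreover have "b * map_poly e h \<noteq> 0"
      using F min_poly_nonzero by auto
    ultimately show False
      using ab(2) by simp
  qed
  ultimately have "C \<noteq> {0}"
    by blast
  moreover have "M1 e C \<noteq> 1"
    using M1_eq_1_iff_map_vector_mem[OF sub \<open>C \<noteq> {0}\<close>]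
      proper_factor_annihilates_no_map_vector[OF factorization irr i(1) ab(1,3)]
    by (auto simp: C_def)
  ultimately show ?thesis
    using code by blast
qed

end

theorem corollary4:
  fixes e :: "'k::field \<Rightarrow> 'l::field"
    and M :: "'k ^ 'n ^ 'n"
    and fs :: "nat \<Rightarrow> 'k poly" and ms :: "nat \<Rightarrow> nat" and s :: nat
  assumes ext: "field_ext e"
    and fin: "finite_degree e"
    and deg: "CARD('n) \<le> degree_ext e"
    and cyc: "cyclic_matrix M"
    and minp: "is_min_poly M (\<Prod>i<s. fs i ^ ms i)"
    and monic: "\<forall>i<s. lead_coeff (fs i) = 1"
    and irr: "\<forall>i<s. irreducible (fs i)"
    and dist: "inj_on fs {..<s}"
    and mpos: "\<forall>i<s. ms i \<ge> 1"
  shows "(\<forall>C :: ('l ^ 'n) set. M_cyclic_code e M C \<and> C \<noteq> {0} \<longrightarrow> M1 e C = 1)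
     \<longleftrightarrow> (\<forall>i<s. irreducible (map_poly e (fs i)))"
proof -
  obtain v where cyclic_vector: "cyclic_endo ((*v) M) v"
    using cyc by (rule cyclic_matrix_imp_cyclic_endo)
  interpret cyclic_code_setting e M v "\<Prod>i<s. fs i ^ ms i"
    by (intro cyclic_code_setting.intro field_embedding.intro cyclic_code_setting_axioms.intro
        ext cyclic_vector minp)
  show ?thesis
  proof
    assume codes: "\<forall>C :: ('l ^ 'n) set. M_cyclic_code e M C \<and> C \<noteq> {0} \<longrightarrow> M1 e C = 1"
    show "\<forall>i<s. irreducible (map_poly e (fs i))"
      using M1_ne_1_if_factor_reducible[OF refl finite_lessThan] irr mpos codes by auto
  next
    assume "\<forall>i<s. irreducible (map_poly e (fs i))"
    then show "\<forall>C :: ('l ^ 'n) set. M_cyclic_code e M C \<and> C \<noteq> {0} \<longrightarrow> M1 e C = 1"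
      using M1_eq_1_if_factors_irreducible[OF refl finite_lessThan] by auto
  qed
qed

end
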